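(* Let $A$ be a set with $n$ elements. Every d-path $\alpha\in\vec P(Y^A)_{\mathbf0}^{\mathbf1}$ has the form $\alpha(t)=[c;\beta(t)]$ for all $t\in[0,1]$, for some $n$-cube $c\in Y^A[n]$ and some continuous path $\beta:[0,1]\to[0,1]^n$ with non-decreasing coordinates, $\beta(0)=(0,\dots,0)$, $\beta(1)=(1,\dots,1)$.
   Context: A precubical set ($\square$-set) $K$ is a sequence of pairwise disjoint sets $(K[n])_{n\ge0}$ with face maps $d^\varepsilon_i:K[n]\to K[n-1]$ ($1\le i\le n$, $\varepsilon\in\{0,1\}$) satisfying $d^\varepsilon_i d^\eta_j=d^\eta_{j-1}d^\varepsilon_i$ for $i<j$; bi-pointed $\square$-sets have chosen vertices $\mathbf0,\mathbf1\in K[0]$. Geometric realization: $|K|=\coprod_n K[n]\times[0,1]^n/\sim$ with $(d^\varepsilon_i c,\mathbf x)\sim(c,\delta^\varepsilon_i\mathbf x)$, where $\delta^\varepsilon_i(x_1,\dots,x_{n-1})=(x_1,\dots,x_{i-1},\varepsilon,x_i,\dots,x_{n-1})$; $[c;\mathbf x]$ is the class. A path $\alpha:[0,1]\to|K|$ is a d-path if there are $0=t_0<\dots<t_m=1$, $c_k\in K[n_k]$ and continuous $\beta_k:[t_{k-1},t_k]\to[0,1]^{n_k}$ with non-decreasing coordinates such that $\alpha(t)=[c_k;\beta_k(t)]$ on $[t_{k-1},t_k]$. $\vec P(K)_{\mathbf0}^{\mathbf1}$ is the space of d-paths from $\mathbf0$ to $\mathbf1$. $Y^A$ is the bi-pointed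 $\square$-set where $Y^A[k]$ is the set of pairs $(c,<)$ with $c:A\to\{0,*,1\}$, $|c^{-1}( * )|=k$, and $<$ a strict total order on $c^{-1}( * )$; if $c^{-1}( * )=\{a_1<\dots<a_k\}$ then $d^\varepsilon_i(c,<)=(c',<')$ where $c'(a_i)=\varepsilon$, $c'=c$ elsewhere, and $<'$ is the restriction of $<$ to $c^{-1}( * )\setminus\{a_i\}$; $\mathbf0=(\text{const}_0,\emptyset)$, $\mathbf1=(\text{const}_1,\emptyset)$. *)

theory Defs
  imports "HOL-Analysis.Analysis" "HOL-Library.FuncSet"
begin

text \<open>Points of the n-cube [0,1]^n are represented as functions nat => real whose
  coordinates 0..n-1 are the n coordinates (coordinate x_k of the paper is x (k-1))
  and which vanish from coordinate n on (normal form).  The space nat => real carries the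
  product topology of HOL-Analysis, which agrees with the Euclidean topology on cube n.\<close>

definition cube :: "nat \<Rightarrow> (nat \<Rightarrow> real) set" where
  "cube n = {x. (\<forall>j<n. 0 \<le> x j \<and> x j \<le> 1) \<and> (\<forall>j\<ge>n. x j = 0)}"

definition bval :: "bool \<Rightarrow> real" where
  "bval e = (if e then 1 else 0)"

text \<open>delta i e (x_1,...,x_{n-1}) = (x_1,...,x_{i-1},e,x_i,...,x_{n-1}), for 1 <= i <= n.\<close>
definition delta :: "nat \<Rightarrow> bool \<Rightarrow> (nat \<Rightarrow> real) \<Rightarrow> (nat \<Rightarrow> real)" where
  "delta i e x = (\<lambda>j. if j < i - 1 then x j else if j = i - 1 then bval e else x (j - 1))"

text \<open>A precubical set is given by its set of cells K, a dimension function dm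
  (c \<in> K[dm c]) and face maps face i e c = d^e_i c (defined for 1 <= i <= dm c).
  The realization |K| is the quotient of the disjoint union of cubes by the equivalence
  relation generated by (d^e_i c, x) ~ (c, delta^e_i x); a point of |K| is an equivalence
  class.\<close>

definition real_gen ::
  "'c set \<Rightarrow> ('c \<Rightarrow> nat) \<Rightarrow> (nat \<Rightarrow> bool \<Rightarrow> 'c \<Rightarrow> 'c)
    \<Rightarrow> ('c \<times> (nat \<Rightarrow> real)) \<Rightarrow> ('c \<times> (nat \<Rightarrow> real)) \<Rightarrow> bool" where
  "real_gen K dm face p q \<longleftrightarrow>
     (\<exists>c i e x. c \<in> K \<and> 1 \<le> i \<and> i \<le> dm c \<and> x \<in> cube (dm c - 1) \<and>
        p = (face i e c, x) \<and> q = (c, delta i e x))"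

definition rclass ::
  "'c set \<Rightarrow> ('c \<Rightarrow> nat) \<Rightarrow> (nat \<Rightarrow> bool \<Rightarrow> 'c \<Rightarrow> 'c)
    \<Rightarrow> 'c \<Rightarrow> (nat \<Rightarrow> real) \<Rightarrow> ('c \<times> (nat \<Rightarrow> real)) set" where
  "rclass K dm face c x = {q. equivclp (real_gen K dm face) (c, x) q}"

definition mono_coords :: "real set \<Rightarrow> (real \<Rightarrow> nat \<Rightarrow> real) \<Rightarrow> bool" where
  "mono_coords I \<beta> \<longleftrightarrow> (\<forall>s\<in>I. \<forall>t\<in>I. s \<le> t \<longrightarrow> (\<forall>j. \<beta> s j \<le> \<beta> t j))"

text \<open>d-paths in |K| (parametrised by [0,1]).  Continuity of alpha is a consequence of
  the piecewise description (pasting lemma), so it is not stated separately.\<close>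
definition dpath ::
  "'c set \<Rightarrow> ('c \<Rightarrow> nat) \<Rightarrow> (nat \<Rightarrow> bool \<Rightarrow> 'c \<Rightarrow> 'c)
    \<Rightarrow> (real \<Rightarrow> ('c \<times> (nat \<Rightarrow> real)) set) \<Rightarrow> bool" where
  "dpath K dm face \<alpha> \<longleftrightarrow>
     (\<exists>m::nat. \<exists>ts::nat \<Rightarrow> real. \<exists>cs::nat \<Rightarrow> 'c. \<exists>\<beta>s::nat \<Rightarrow> real \<Rightarrow> nat \<Rightarrow> real.
        1 \<le> m \<and> ts 0 = 0 \<and> ts m = 1 \<and> (\<forall>k<m. ts k < ts (Suc k)) \<and>
        (\<forall>k\<in>{1..m}.
            cs k \<in> K \<and>
            continuous_on {ts (k - 1)..ts k} (\<beta>s k) \<and>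
            (\<forall>t\<in>{ts (k - 1)..ts k}. \<beta>s k t \<in> cube (dm (cs k))) \<and>
            mono_coords {ts (k - 1)..ts k} (\<beta>s k) \<and>
            (\<forall>t\<in>{ts (k - 1)..ts k}. \<alpha> t = rclass K dm face (cs k) (\<beta>s k t))))"

datatype tri = T0 | Star | T1

text \<open>A cell of Y^A is a pair (c, <) with c : A -> {0,*,1} (an extensional function,
  undefined outside A) and < a strict total order on c^{-1}(*), given as a relation.\<close>
type_synonym 'a ycell = "('a \<Rightarrow> tri) \<times> ('a \<times> 'a) set"

definition stars :: "'a set \<Rightarrow> ('a \<Rightarrow> tri) \<Rightarrow> 'a set" where
  "stars A c = {a \<in> A. c a = Star}"

definition Ycells :: "'a set \<Rightarrow> 'a ycell set" where
  "Ycells A = {(c, lt). c \<in> A \<rightarrow>\<^sub>E UNIV \<and> lt \<subseteq> stars A c \<times> stars A c \<and>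
                         strict_linear_order_on (stars A c) lt}"

definition Ydim :: "'a set \<Rightarrow> 'a ycell \<Rightarrow> nat" where
  "Ydim A cl = card (stars A (fst cl))"

text \<open>The i-th element a_i (1-based) of c^{-1}(*) w.r.t. <.\<close>
definition ith_star :: "'a set \<Rightarrow> 'a ycell \<Rightarrow> nat \<Rightarrow> 'a" where
  "ith_star A cl i = (THE a. a \<in> stars A (fst cl) \<and>
                         card {b. (b, a) \<in> snd cl} = i - 1)"

definition tval :: "bool \<Rightarrow> tri" where
  "tval e = (if e then T1 else T0)"

definition Yface :: "'a set \<Rightarrow> nat \<Rightarrow> bool \<Rightarrow> 'a ycell \<Rightarrow> 'a ycell" where
  "Yface A i e cl =
     (let a = ith_star A cl i;
          c' = (fst cl)(a := tval e);
          S' = stars A (fst cl) - {a}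
      in (c', snd cl \<inter> (S' \<times> S')))"

definition Yzero :: "'a set \<Rightarrow> 'a ycell" where
  "Yzero A = (\<lambda>a\<in>A. T0, {})"

definition Yone :: "'a set \<Rightarrow> 'a ycell" where
  "Yone A = (\<lambda>a\<in>A. T1, {})"

definition zero_vec :: "nat \<Rightarrow> real" where "zero_vec = (\<lambda>j. 0)"

definition one_vec :: "nat \<Rightarrow> nat \<Rightarrow> real" where
  "one_vec n = (\<lambda>j. if j < n then 1 else 0)"

end

(* A point [c; x] of |Y^A| is determined by its coordinates p : A -> [0,1] (p a is 0 or 1 if
   c a is 0 or 1, and the coordinate of x at the position of a in the order of c if c a = * )
   together with the order of c restricted to the interior coordinates {a. 0 < p a < 1}:
   passing to faces at star coordinates equal to 0 or 1 reaches a representative all of whose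
   star coordinates are interior, and that representative is unique.
   Along a d-path every p a is continuous and non-decreasing, so an element that is interior
   at some time before s and at some time after s is interior at s. Hence the orders seen on
   consecutive pieces of the path agree on their common elements and amalgamate to a single
   linear order L on A, and the whole path lies in the n-cube (A -> *, L). *)

theory Submission
  imports Defs "HOL-Library.List_Lexorder"
begin

definition strict_linorder_on :: "'a set \<Rightarrow> ('a \<times> 'a) set \<Rightarrow> bool" where
  "strict_linorder_on S r \<longleftrightarrow> r \<subseteq> S \<times> S \<and> strict_linear_order_on S r"

lemma strict_linorder_onD:
  assumes "strict_linorder_on S r"
  shows "r \<subseteq> S \<times> S" "trans r" "irrefl r" "total_on S r"
  using assms by (auto simp: strict_linorder_on_def strict_linear_order_on_def)

lemma strict_linorder_on_restrict:
  assumes "strict_linorder_on S r" "T \<subseteq> S"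
  shows "strict_linorder_on T (Restr r T)"
proof -
  note r = strict_linorder_onD[OF assms(1)]
  have "trans (Restr r T)"
    using r(2) by (auto intro: trans_Int simp: trans_def)
  moreover have "irrefl (Restr r T)"
    using r(3) by (auto simp: irrefl_on_def)
  moreover have "total_on T (Restr r T)"
    using r(4) assms(2) by (auto simp: total_on_def)
  ultimately show ?thesis
    by (simp add: strict_linorder_on_def strict_linear_order_on_def)
qed

lemma strict_linorder_on_inv_image:
  fixes f :: "'a \<Rightarrow> 'b::linorder"
  assumes "inj_on f S"
  shows "strict_linorder_on S {(a, b). a \<in> S \<and> b \<in> S \<and> f a < f b}"
proof -
  have "f a < f b \<or> f b < f a" if "a \<in> S" "b \<in> S" "a \<noteq> b" for a b
    using assms that by (metis inj_onD neq_iff)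
  then show ?thesis
    unfolding strict_linorder_on_def strict_linear_order_on_def total_on_def
    by (auto simp: trans_def irrefl_on_def)
qed

lemma ex_strict_linorder_on:
  assumes "finite S"
  shows "\<exists>r. strict_linorder_on S r"
proof -
  obtain f :: "'a \<Rightarrow> nat" where "inj_on f S"
    using finite_imp_inj_to_nat_seg[OF assms] by blast
  then show ?thesis using strict_linorder_on_inv_image by blast
qed

lemma card_below_mono:
  assumes "finite S" "strict_linorder_on S r" "(a, b) \<in> r"
  shows "card {m \<in> C. (m, a) \<in> r} \<le> card {m \<in> C. (m, b) \<in> r}"
    and "a \<in> C \<Longrightarrow> card {m \<in> C. (m, a) \<in> r} < card {m \<in> C. (m, b) \<in> r}"
proof -
  note r = strict_linorder_onD[OF assms(2)]
  have fin: "finite {m \<in> C. (m, b) \<in> r}"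
    using r(1) by (auto intro: finite_subset[OF _ assms(1)])
  have sub: "{m \<in> C. (m, a) \<in> r} \<subseteq> {m \<in> C. (m, b) \<in> r}"
    using r(2) assms(3) unfolding trans_def by blast
  show "card {m \<in> C. (m, a) \<in> r} \<le> card {m \<in> C. (m, b) \<in> r}"
    using card_mono[OF fin sub] .
  assume "a \<in> C"
  then have "a \<in> {m \<in> C. (m, b) \<in> r} - {m \<in> C. (m, a) \<in> r}"
    using assms(3) r(3) unfolding irrefl_on_def by blast
  then show "card {m \<in> C. (m, a) \<in> r} < card {m \<in> C. (m, b) \<in> r}"
    using psubset_card_mono[OF fin] sub by blast
qed

definition order_rank :: "('a \<times> 'a) set \<Rightarrow> 'a \<Rightarrow> nat" where
  "order_rank r a = card {b. (b, a) \<in> r}"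

lemma order_rank_less:
  assumes "finite S" "strict_linorder_on S r" "(a, b) \<in> r"
  shows "order_rank r a < order_rank r b"
  using card_below_mono(2)[OF assms, of UNIV] by (simp add: order_rank_def)

lemma bij_betw_order_rank:
  assumes "finite S" "strict_linorder_on S r"
  shows "bij_betw (order_rank r) S {..<card S}"
proof -
  note r = strict_linorder_onD[OF assms(2)]
  have inj: "inj_on (order_rank r) S"
    using order_rank_less[OF assms] r(4) unfolding inj_on_def total_on_def by (metis less_irrefl)
  have "order_rank r a < card S" if "a \<in> S" for a
  proof -
    have "{b. (b, a) \<in> r} \<subseteq> S - {a}"
      using r(1,3) unfolding irrefl_on_def by blast
    then have "order_rank r a \<le> card (S - {a})"
      unfolding order_rank_def using assms(1) by (simp add: card_mono)
    then show ?thesis using that assms(1) card_Diff1_less by fastforce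
  qed
  then have "order_rank r ` S \<subseteq> {..<card S}" by blast
  moreover have "card (order_rank r ` S) = card {..<card S}"
    using card_image[OF inj] by simp
  ultimately have "order_rank r ` S = {..<card S}"
    by (simp add: card_subset_eq)
  then show ?thesis using inj by (simp add: bij_betw_def)
qed

text \<open>Elements are compared first by the number of common elements below them; within such a
  block the elements of X1 - X2 come first, then those of X2 - X1, then the common element
  closing the block, and ties are broken by rank.\<close>
definition merge_key :: "'a set \<Rightarrow> 'a set \<Rightarrow> ('a \<times> 'a) set \<Rightarrow> ('a \<times> 'a) set \<Rightarrow> 'a \<Rightarrow> nat list" where
  "merge_key X1 X2 r1 r2 x =
     [card {m \<in> X1 \<inter> X2. (m, x) \<in> r1 \<union> r2},
      if x \<in> X1 \<inter> X2 then 2 else if x \<in> X1 then 0 else 1,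
      order_rank (r1 \<union> r2) x]"

lemma merge_key_less:
  assumes fin: "finite (X1 \<union> X2)"
    and r1: "strict_linorder_on X1 r1" and r2: "strict_linorder_on X2 r2"
    and agree: "Restr r1 X2 = Restr r2 X1"
    and side: "(X, r) = (X1, r1) \<or> (X, r) = (X2, r2)" and ab: "(a, b) \<in> r"
  shows "merge_key X1 X2 r1 r2 a < merge_key X1 X2 r1 r2 b"
proof -
  let ?C = "X1 \<inter> X2"
  define \<kappa> where "\<kappa> x = card {m \<in> ?C. (m, x) \<in> r1 \<union> r2}" for x
  have r: "strict_linorder_on X r" and fin_X: "finite X"
    using side r1 r2 fin by auto
  have ab_in: "a \<in> X" "b \<in> X"
    using ab strict_linorder_onD(1)[OF r] by auto
  have "(m, x) \<in> r1" if "(m, x) \<in> r2" "m \<in> X1" "x \<in> X1" for m x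
    using agree that by blast
  moreover have "(m, x) \<in> r2" if "(m, x) \<in> r1" "m \<in> X2" "x \<in> X2" for m x
    using agree that by blast
  ultimately have below: "{m \<in> ?C. (m, x) \<in> r1 \<union> r2} = {m \<in> ?C. (m, x) \<in> r}" if "x \<in> X" for x
    using side that by auto
  have rank_eq: "order_rank (r1 \<union> r2) x = order_rank r x" if "x \<in> X - ?C" for x
  proof -
    have "{m. (m, x) \<in> r1 \<union> r2} = {m. (m, x) \<in> r}"
      using side that strict_linorder_onD(1)[OF r1] strict_linorder_onD(1)[OF r2] by auto
    then show ?thesis by (simp add: order_rank_def)
  qed
  have key: "merge_key X1 X2 r1 r2 x =
      [\<kappa> x, if x \<in> ?C then 2 else if x \<in> X1 then 0 else 1, order_rank (r1 \<union> r2) x]" for x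
    by (simp add: merge_key_def \<kappa>_def)
  have \<kappa>_le: "\<kappa> a \<le> \<kappa> b"
    using card_below_mono(1)[OF fin_X r ab, of ?C] below ab_in by (simp add: \<kappa>_def)
  consider "a \<in> ?C" | "a \<notin> ?C" "b \<in> ?C" | "a \<notin> ?C" "b \<notin> ?C" by blast
  then show ?thesis
  proof cases
    case 1
    then have "\<kappa> a < \<kappa> b"
      using card_below_mono(2)[OF fin_X r ab 1] below ab_in by (simp add: \<kappa>_def)
    then show ?thesis by (simp add: key)
  next
    case 2
    then show ?thesis using \<kappa>_le by (auto simp: key le_less)
  next
    case 3
    then have "order_rank (r1 \<union> r2) a < order_rank (r1 \<union> r2) b" "a \<in> X1 \<longleftrightarrow> b \<in> X1"
      using order_rank_less[OF fin_X r ab] rank_eq ab_in side by auto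
    then show ?thesis using 3 \<kappa>_le by (auto simp: key le_less)
  qed
qed

lemma strict_linorder_on_amalgamation:
  assumes fin: "finite (X1 \<union> X2)"
    and r1: "strict_linorder_on X1 r1" and r2: "strict_linorder_on X2 r2"
    and agree: "Restr r1 X2 = Restr r2 X1"
  shows "\<exists>r. strict_linorder_on (X1 \<union> X2) r \<and> Restr r X1 = r1 \<and> Restr r X2 = r2"
proof -
  let ?key = "merge_key X1 X2 r1 r2"
  note key_less = merge_key_less[OF fin r1 r2 agree]
  define r where "r = {(a, b). a \<in> X1 \<union> X2 \<and> b \<in> X1 \<union> X2 \<and> ?key a < ?key b}"
  have restrict_eq: "Restr r X = s"
    if side: "(X, s) = (X1, r1) \<or> (X, s) = (X2, r2)" for X s
  proof -
    have s: "strict_linorder_on X s" using side r1 r2 by auto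
    have "(a, b) \<in> s" if "a \<in> X" "b \<in> X" "?key a < ?key b" for a b
      using key_less[OF side, of b a] that strict_linorder_onD(4)[OF s]
      unfolding total_on_def by (metis less_asym less_irrefl)
    then show ?thesis
      using key_less[OF side] strict_linorder_onD(1)[OF s] side unfolding r_def by auto
  qed
  have "inj_on ?key (X1 \<union> X2)"
  proof (rule inj_onI, rule ccontr)
    fix a b assume ab: "a \<in> X1 \<union> X2" "b \<in> X1 \<union> X2" "?key a = ?key b" "a \<noteq> b"
    then have "a \<in> X1 \<and> b \<in> X1 \<or> a \<in> X2 \<and> b \<in> X2"
      unfolding merge_key_def by (auto split: if_splits)
    then show False
      using key_less[of X1 r1] key_less[of X2 r2] ab
        strict_linorder_onD(4)[OF r1] strict_linorder_onD(4)[OF r2]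
      unfolding total_on_def by (metis less_irrefl)
  qed
  then have "strict_linorder_on (X1 \<union> X2) r"
    unfolding r_def by (rule strict_linorder_on_inv_image)
  then show ?thesis using restrict_eq r1 r2 by blast
qed

lemma order_rank_remove:
  assumes "finite S" "strict_linorder_on S r" "a \<in> S" "b \<in> S" "b \<noteq> a"
  shows "order_rank (Restr r (S - {a})) b =
    (if order_rank r b < order_rank r a then order_rank r b else order_rank r b - 1)"
proof -
  note r = strict_linorder_onD[OF assms(2)]
  have "{c. (c, b) \<in> Restr r (S - {a})} = {c. (c, b) \<in> r} - {a}"
    using r(1) assms(4,5) by blast
  then have rank_eq: "order_rank (Restr r (S - {a})) b = card ({c. (c, b) \<in> r} - {a})"
    by (simp add: order_rank_def)
  have fin: "finite {c. (c, b) \<in> r}"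
    using r(1) by (auto intro: finite_subset[OF _ assms(1)])
  show ?thesis
  proof (cases "(a, b) \<in> r")
    case True
    then show ?thesis
      using order_rank_less[OF assms(1,2) True] fin unfolding rank_eq by (simp add: order_rank_def)
  next
    case False
    then have "(b, a) \<in> r"
      using r(4) assms(3-5) unfolding total_on_def by blast
    then show ?thesis
      using order_rank_less[OF assms(1,2)] False unfolding rank_eq by (simp add: order_rank_def)
  qed
qed

lemma strict_linorder_on_extend:
  assumes "finite A" "S \<subseteq> A" "strict_linorder_on S r"
  shows "\<exists>r'. strict_linorder_on A r' \<and> r' \<inter> (S \<times> S) = r"
proof -
  obtain r0 where r0: "strict_linorder_on (A - S) r0"
    using ex_strict_linorder_on assms(1) by blast
  have "Restr r (A - S) = Restr r0 S"
    using strict_linorder_onD(1)[OF assms(3)] strict_linorder_onD(1)[OF r0] by blast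
  moreover have "S \<union> (A - S) = A" using assms(2) by blast
  ultimately show ?thesis
    using strict_linorder_on_amalgamation[of S "A - S" r r0] assms r0 by auto
qed

lemma Restr_eq_subset:
  assumes "J \<subseteq> D" "Restr L D = Restr L' D"
  shows "Restr L J = Restr L' J"
proof -
  have "Restr L J = Restr (Restr L D) J" using assms(1) by blast
  also have "\<dots> = (Restr L' D) \<inter> (J \<times> J)" by (simp only: assms(2))
  also have "\<dots> = Restr L' J" using assms(1) by blast
  finally show ?thesis .
qed

lemma strict_linorder_on_glue:
  assumes fin: "finite (D \<union> U)"
    and L1: "strict_linorder_on (D \<union> U) L1" and L2: "strict_linorder_on (D \<union> U) L2"
    and I1: "\<forall>t\<in>I1. R t = Restr L1 (J t) \<and> J t \<subseteq> D"
    and I2: "\<forall>t\<in>I2. R t = Restr L2 (J t) \<and> J t \<subseteq> U"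
    and s: "s \<in> I1" "s \<in> I2" "J s = D \<inter> U"
  shows "\<exists>L. strict_linorder_on (D \<union> U) L \<and> (\<forall>t\<in>I1 \<union> I2. R t = Restr L (J t))"
proof -
  have "Restr L1 (J s) = Restr L2 (J s)"
    using bspec[OF I1 s(1)] bspec[OF I2 s(2)] by simp
  then have "Restr (Restr L1 D) U = Restr (Restr L2 U) D"
    unfolding s(3) by blast
  then obtain L where L: "strict_linorder_on (D \<union> U) L"
    "Restr L D = Restr L1 D" "Restr L U = Restr L2 U"
    using strict_linorder_on_amalgamation[OF fin strict_linorder_on_restrict[OF L1, of D]
        strict_linorder_on_restrict[OF L2, of U]] by auto
  have "R t = Restr L (J t)" if "t \<in> I1 \<union> I2" for t
  proof (cases "t \<in> I1")
    case True
    then show ?thesis using I1 Restr_eq_subset[OF _ L(2)] by simp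
  next
    case False
    then show ?thesis using that I2 Restr_eq_subset[OF _ L(3)] by simp
  qed
  then show ?thesis using L(1) by blast
qed

abbreviation ygen :: "'a set \<Rightarrow> 'a ycell \<times> (nat \<Rightarrow> real) \<Rightarrow> 'a ycell \<times> (nat \<Rightarrow> real) \<Rightarrow> bool" where
  "ygen A \<equiv> real_gen (Ycells A) (Ydim A) (Yface A)"

abbreviation yclass :: "'a set \<Rightarrow> 'a ycell \<Rightarrow> (nat \<Rightarrow> real) \<Rightarrow> ('a ycell \<times> (nat \<Rightarrow> real)) set" where
  "yclass A \<equiv> rclass (Ycells A) (Ydim A) (Yface A)"

definition yrep :: "'a set \<Rightarrow> 'a ycell \<Rightarrow> (nat \<Rightarrow> real) \<Rightarrow> bool" where
  "yrep A cl x \<longleftrightarrow> cl \<in> Ycells A \<and> x \<in> cube (Ydim A cl)"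

lemma rclass_eq_iff:
  "rclass K dm f c x = rclass K dm f c' x' \<longleftrightarrow> equivclp (real_gen K dm f) (c, x) (c', x')"
proof
  assume "rclass K dm f c x = rclass K dm f c' x'"
  then show "equivclp (real_gen K dm f) (c, x) (c', x')"
    unfolding rclass_def by (metis equivclp_refl mem_Collect_eq)
next
  assume "equivclp (real_gen K dm f) (c, x) (c', x')"
  then show "rclass K dm f c x = rclass K dm f c' x'"
    unfolding rclass_def by (blast intro: equivclp_trans equivclp_sym)
qed

lemma Ycells_iff:
  "cl \<in> Ycells A \<longleftrightarrow> fst cl \<in> A \<rightarrow>\<^sub>E UNIV \<and> strict_linorder_on (stars A (fst cl)) (snd cl)"
  by (cases cl) (auto simp: Ycells_def strict_linorder_on_def)

lemma finite_stars: "finite A \<Longrightarrow> finite (stars A c)"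
  by (simp add: stars_def)

lemma ith_star_eq:
  assumes "finite A" "cl \<in> Ycells A" "a \<in> stars A (fst cl)" "order_rank (snd cl) a = i - 1"
  shows "ith_star A cl i = a"
  unfolding ith_star_def order_rank_def[symmetric]
proof (rule the_equality)
  show "a \<in> stars A (fst cl) \<and> order_rank (snd cl) a = i - 1" using assms(3,4) by simp
next
  have "inj_on (order_rank (snd cl)) (stars A (fst cl))"
    using bij_betw_order_rank[OF finite_stars[OF assms(1)]] assms(2) by (simp add: Ycells_iff bij_betw_def)
  then show "b = a" if "b \<in> stars A (fst cl) \<and> order_rank (snd cl) b = i - 1" for b
    using that assms(3,4) by (metis inj_onD)
qed

lemma ith_star:
  assumes "finite A" "cl \<in> Ycells A" "i \<in> {1..Ydim A cl}"
  shows "ith_star A cl i \<in> stars A (fst cl)" "order_rank (snd cl) (ith_star A cl i) = i - 1"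
proof -
  have "order_rank (snd cl) ` stars A (fst cl) = {..<Ydim A cl}"
    using bij_betw_order_rank[OF finite_stars[OF assms(1)]] assms(2)
    by (simp add: Ycells_iff bij_betw_def Ydim_def)
  then obtain a where "a \<in> stars A (fst cl)" "order_rank (snd cl) a = i - 1"
    using assms(3) by (metis atLeastAtMost_iff diff_less imageE lessThan_iff less_le_trans
        less_numeral_extra(1) order.refl)
  then show "ith_star A cl i \<in> stars A (fst cl)" "order_rank (snd cl) (ith_star A cl i) = i - 1"
    using ith_star_eq[OF assms(1,2)] by simp_all
qed

lemma Yface_eq:
  "Yface A i e cl = ((fst cl)(ith_star A cl i := tval e),
     Restr (snd cl) (stars A (fst cl) - {ith_star A cl i}))"
  by (simp add: Yface_def Let_def)

lemma stars_Yface: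
  assumes "finite A" "cl \<in> Ycells A" "i \<in> {1..Ydim A cl}"
  shows "stars A (fst (Yface A i e cl)) = stars A (fst cl) - {ith_star A cl i}"
  using ith_star(1)[OF assms] by (auto simp: Yface_eq stars_def tval_def)

lemma Yface_in_Ycells:
  assumes "finite A" "cl \<in> Ycells A" "i \<in> {1..Ydim A cl}"
  shows "Yface A i e cl \<in> Ycells A" "Ydim A (Yface A i e cl) = Ydim A cl - 1"
proof -
  have "ith_star A cl i \<in> A"
    using ith_star(1)[OF assms] by (simp add: stars_def)
  then have "fst (Yface A i e cl) \<in> A \<rightarrow>\<^sub>E UNIV"
    using assms(2) by (auto simp: Ycells_iff Yface_eq PiE_def extensional_def)
  moreover have "strict_linorder_on (stars A (fst cl)) (snd cl)"
    using assms(2) by (simp add: Ycells_iff)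
  then have "strict_linorder_on (stars A (fst (Yface A i e cl))) (snd (Yface A i e cl))"
    unfolding stars_Yface[OF assms] by (simp add: Yface_eq strict_linorder_on_restrict)
  ultimately show "Yface A i e cl \<in> Ycells A"
    by (simp add: Ycells_iff)
  show "Ydim A (Yface A i e cl) = Ydim A cl - 1"
    using ith_star(1)[OF assms] finite_stars[OF assms(1)]
    by (simp add: Ydim_def stars_Yface[OF assms])
qed

definition ycoords :: "'a ycell \<Rightarrow> (nat \<Rightarrow> real) \<Rightarrow> 'a \<Rightarrow> real" where
  "ycoords cl x a = (case fst cl a of T0 \<Rightarrow> 0 | Star \<Rightarrow> x (order_rank (snd cl) a) | T1 \<Rightarrow> 1)"

definition inner_coords :: "'a set \<Rightarrow> ('a \<Rightarrow> real) \<Rightarrow> 'a set" where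
  "inner_coords A f = {a \<in> A. 0 < f a \<and> f a < 1}"

definition ypoint :: "'a set \<Rightarrow> 'a ycell \<Rightarrow> (nat \<Rightarrow> real) \<Rightarrow> ('a \<Rightarrow> real) \<times> ('a \<times> 'a) set" where
  "ypoint A cl x = (restrict (ycoords cl x) A, Restr (snd cl) (inner_coords A (ycoords cl x)))"

lemma inner_coords_restrict [simp]: "inner_coords A (restrict f A) = inner_coords A f"
  by (auto simp: inner_coords_def)

lemma inner_coords_subset_stars: "inner_coords A (ycoords cl x) \<subseteq> stars A (fst cl)"
proof
  fix a assume "a \<in> inner_coords A (ycoords cl x)"
  then show "a \<in> stars A (fst cl)"
    by (cases "fst cl a") (auto simp: inner_coords_def ycoords_def stars_def)
qed

lemma ycoords_Yface:
  assumes "finite A" "cl \<in> Ycells A" "i \<in> {1..Ydim A cl}" "b \<in> A"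
  shows "ycoords (Yface A i e cl) x b = ycoords cl (delta i e x) b"
proof -
  let ?a = "ith_star A cl i" and ?S = "stars A (fst cl)" and ?r = "snd cl"
  have a: "?a \<in> ?S" "order_rank ?r ?a = i - 1" using ith_star[OF assms(1-3)] by auto
  have r: "strict_linorder_on ?S ?r" using assms(2) by (simp add: Ycells_iff)
  have fin: "finite ?S" using finite_stars[OF assms(1)] .
  show ?thesis
  proof (cases "b = ?a")
    case True
    then show ?thesis
      using a by (simp add: ycoords_def Yface_eq delta_def stars_def tval_def bval_def)
  next
    case b: False
    show ?thesis
    proof (cases "fst cl b = Star")
      case True
      then have "b \<in> ?S" using assms(4) by (simp add: stars_def)
      then have "order_rank (Restr ?r (?S - {?a})) b =
          (if order_rank ?r b < i - 1 then order_rank ?r b else order_rank ?r b - 1)"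
        "order_rank ?r b \<noteq> i - 1"
        using order_rank_remove[OF fin r a(1) _ b] ith_star_eq[OF assms(1,2)] b unfolding a(2) by auto
      then show ?thesis using True b by (simp add: ycoords_def Yface_eq delta_def)
    next
      case False
      then show ?thesis using b by (cases "fst cl b") (simp_all add: ycoords_def Yface_eq)
    qed
  qed
qed

lemma ypoint_Yface:
  assumes "finite A" "cl \<in> Ycells A" "i \<in> {1..Ydim A cl}"
  shows "ypoint A (Yface A i e cl) x = ypoint A cl (delta i e x)"
proof -
  let ?a = "ith_star A cl i" and ?I = "inner_coords A (ycoords cl (delta i e x))"
  have coords: "restrict (ycoords (Yface A i e cl) x) A = restrict (ycoords cl (delta i e x)) A"
    by (rule restrict_ext) (rule ycoords_Yface[OF assms])
  have inner: "inner_coords A (ycoords (Yface A i e cl) x) = ?I"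
    unfolding inner_coords_def by (rule Collect_cong) (use ycoords_Yface[OF assms] in auto)
  have "ycoords cl (delta i e x) ?a = bval e"
    using ith_star[OF assms] by (simp add: ycoords_def stars_def delta_def)
  then have "?a \<notin> ?I"
    by (simp add: inner_coords_def bval_def)
  then have "Restr (Restr (snd cl) (stars A (fst cl) - {?a})) ?I = Restr (snd cl) ?I"
    using inner_coords_subset_stars[of A cl "delta i e x"] by blast
  then show ?thesis
    unfolding ypoint_def coords inner by (simp add: Yface_eq)
qed

lemma ypoint_equivclp:
  assumes "finite A" "equivclp (ygen A) p q"
  shows "case_prod (ypoint A) p = case_prod (ypoint A) q"
  using assms(2)
proof (induction rule: equivclp_induct)
  case (step q q')
  have gen: "case_prod (ypoint A) u = case_prod (ypoint A) v" if "ygen A u v" for u v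
    using that ypoint_Yface[OF assms(1)] by (auto simp: real_gen_def)
  from step.hyps(2) have "case_prod (ypoint A) q = case_prod (ypoint A) q'"
    using gen by (elim disjE) auto
  then show ?case
    using step.IH by simp
qed simp

definition ypoint_of :: "'a set \<Rightarrow> ('a ycell \<times> (nat \<Rightarrow> real)) set \<Rightarrow> ('a \<Rightarrow> real) \<times> ('a \<times> 'a) set" where
  "ypoint_of A P = (case SOME q. q \<in> P of (cl, x) \<Rightarrow> ypoint A cl x)"

lemma restrict_fst_ypoint_of [simp]: "restrict (fst (ypoint_of A P)) A = fst (ypoint_of A P)"
  by (simp add: ypoint_of_def ypoint_def split: prod.split)

lemma ypoint_of_yclass:
  assumes "finite A"
  shows "ypoint_of A (yclass A cl x) = ypoint A cl x"
proof -
  have "(cl, x) \<in> yclass A cl x" by (simp add: rclass_def)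
  then have "(SOME q. q \<in> yclass A cl x) \<in> yclass A cl x" by (rule someI)
  then have "equivclp (ygen A) (cl, x) (SOME q. q \<in> yclass A cl x)" by (simp add: rclass_def)
  from ypoint_equivclp[OF assms this] show ?thesis
    by (simp add: ypoint_of_def split: prod.splits)
qed

lemma ycoords_bounds:
  assumes "finite A" "yrep A cl x" "a \<in> A"
  shows "0 \<le> ycoords cl x a" "ycoords cl x a \<le> 1"
proof -
  have "order_rank (snd cl) a < Ydim A cl" if "fst cl a = Star"
    using bij_betw_order_rank[OF finite_stars[OF assms(1)]] assms(2,3) that
    by (auto simp: yrep_def Ycells_iff Ydim_def bij_betw_def stars_def)
  then show "0 \<le> ycoords cl x a" "ycoords cl x a \<le> 1"
    using assms(2) by (cases "fst cl a"; simp add: ycoords_def yrep_def cube_def)+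
qed

lemma ex_face_through_boundary_star:
  assumes "finite A" "yrep A cl x" "a \<in> stars A (fst cl)" "a \<notin> inner_coords A (ycoords cl x)"
  shows "\<exists>cl' x'. yrep A cl' x' \<and> Ydim A cl' < Ydim A cl \<and> ypoint A cl' x' = ypoint A cl x \<and>
           ygen A (cl', x') (cl, x)"
proof -
  have cl: "cl \<in> Ycells A" and x: "x \<in> cube (Ydim A cl)" using assms(2) by (auto simp: yrep_def)
  define j where "j = order_rank (snd cl) a"
  have j: "j < Ydim A cl"
    using bij_betw_order_rank[OF finite_stars[OF assms(1)]] cl assms(3)
    by (auto simp: j_def Ycells_iff Ydim_def bij_betw_def)
  have "ycoords cl x a = x j" using assms(3) by (simp add: ycoords_def stars_def j_def)
  then have "x j = 0 \<or> x j = 1"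
    using assms(3,4) ycoords_bounds[OF assms(1,2), of a] by (auto simp: inner_coords_def stars_def)
  then obtain e where e: "bval e = x j" by (metis bval_def)
  define x' where "x' k = (if k < j then x k else x (Suc k))" for k
  define i where "i = Suc j"
  have i: "i \<in> {1..Ydim A cl}" using j by (simp add: i_def)
  have delta: "delta i e x' = x"
    using e by (auto simp: delta_def i_def x'_def fun_eq_iff)
  have x': "x' \<in> cube (Ydim A cl - 1)"
    using x j by (auto simp: cube_def x'_def)
  have "ith_star A cl i = a"
    using ith_star_eq[OF assms(1) cl assms(3)] by (simp add: i_def j_def)
  show ?thesis
  proof (intro exI conjI)
    show "yrep A (Yface A i e cl) x'"
      using Yface_in_Ycells[OF assms(1) cl i] x' by (simp add: yrep_def)
    show "Ydim A (Yface A i e cl) < Ydim A cl"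
      using Yface_in_Ycells[OF assms(1) cl i] j by simp
    show "ypoint A (Yface A i e cl) x' = ypoint A cl x"
      using ypoint_Yface[OF assms(1) cl i] delta by simp
    show "ygen A (Yface A i e cl, x') (cl, x)"
      unfolding real_gen_def using cl i x' delta
      by (intro exI[of _ cl] exI[of _ i] exI[of _ e] exI[of _ x']) auto
  qed
qed

lemma ex_inner_rep:
  assumes "finite A" "yrep A cl x"
  shows "\<exists>cl' x'. yrep A cl' x' \<and> inner_coords A (ycoords cl' x') = stars A (fst cl') \<and>
           ypoint A cl' x' = ypoint A cl x \<and> equivclp (ygen A) (cl', x') (cl, x)"
  using assms(2)
proof (induction "Ydim A cl" arbitrary: cl x rule: less_induct)
  case less
  show ?case
  proof (cases "inner_coords A (ycoords cl x) = stars A (fst cl)")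
    case True
    then show ?thesis using less.prems by (intro exI[of _ cl] exI[of _ x]) simp
  next
    case False
    then obtain a where "a \<in> stars A (fst cl)" "a \<notin> inner_coords A (ycoords cl x)"
      using inner_coords_subset_stars[of A cl x] by blast
    then obtain cl1 x1 where step: "yrep A cl1 x1" "Ydim A cl1 < Ydim A cl"
      "ypoint A cl1 x1 = ypoint A cl x" "ygen A (cl1, x1) (cl, x)"
      using ex_face_through_boundary_star[OF assms(1) less.prems] by blast
    obtain cl' x' where IH: "yrep A cl' x'" "inner_coords A (ycoords cl' x') = stars A (fst cl')"
      "ypoint A cl' x' = ypoint A cl1 x1" "equivclp (ygen A) (cl', x') (cl1, x1)"
      using less.hyps[OF step(2,1)] by blast
    have "equivclp (ygen A) (cl', x') (cl, x)"
      using IH(4) r_into_equivclp[of "ygen A", OF step(4)] by (rule equivclp_trans)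
    then show ?thesis
      using IH(1-3) step(3) by (intro exI[of _ cl'] exI[of _ x']) simp
  qed
qed

lemma ycoords_inject:
  assumes "finite A" "yrep A cl x" "yrep A cl x'" "\<forall>a\<in>A. ycoords cl x a = ycoords cl x' a"
  shows "x = x'"
proof
  fix k
  show "x k = x' k"
  proof (cases "k < Ydim A cl")
    case True
    have "strict_linorder_on (stars A (fst cl)) (snd cl)"
      using assms(2) by (simp add: yrep_def Ycells_iff)
    then have "k \<in> order_rank (snd cl) ` stars A (fst cl)"
      using bij_betw_order_rank[OF finite_stars[OF assms(1)]] True by (simp add: bij_betw_def Ydim_def)
    then obtain a where "a \<in> stars A (fst cl)" "order_rank (snd cl) a = k"
      by blast
    then show ?thesis
      using assms(4) by (force simp: ycoords_def stars_def)
  next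
    case False
    then show ?thesis
      using assms(2,3) by (simp add: yrep_def cube_def)
  qed
qed

lemma inner_rep_unique:
  assumes "finite A" "yrep A cl x" "yrep A cl' x'"
    and inner: "inner_coords A (ycoords cl x) = stars A (fst cl)"
      "inner_coords A (ycoords cl' x') = stars A (fst cl')"
    and eq: "ypoint A cl x = ypoint A cl' x'"
  shows "cl = cl' \<and> x = x'"
proof -
  obtain c r c' r' where cl: "cl = (c, r)" and cl': "cl' = (c', r')" by fastforce
  have coords: "ycoords cl x a = ycoords cl' x' a" if "a \<in> A" for a
    using eq that unfolding ypoint_def by (metis fst_conv restrict_apply')
  then have "inner_coords A (ycoords cl x) = inner_coords A (ycoords cl' x')"
    unfolding inner_coords_def by (intro Collect_cong) auto
  then have stars: "stars A c = stars A c'"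
    using inner by (simp add: cl cl')
  have ext_cl: "c \<in> A \<rightarrow>\<^sub>E UNIV" "c' \<in> A \<rightarrow>\<^sub>E UNIV"
    and r: "strict_linorder_on (stars A c) r" "strict_linorder_on (stars A c') r'"
    using assms(2,3) by (auto simp: yrep_def Ycells_iff cl cl')
  have c: "c = c'"
  proof
    fix a
    show "c a = c' a"
    proof (cases "a \<in> A")
      case True
      then have "c a = Star \<longleftrightarrow> c' a = Star"
        using stars unfolding stars_def by blast
      then show ?thesis
        using coords[OF True] by (cases "c a"; cases "c' a") (simp_all add: ycoords_def cl cl')
    next
      case False
      then show ?thesis using PiE_arb[OF ext_cl(1) False] PiE_arb[OF ext_cl(2) False] by simp
    qed
  qed
  have "snd (ypoint A cl x) = r" "snd (ypoint A cl' x') = r'"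
    using inner strict_linorder_onD(1)[OF r(1)] strict_linorder_onD(1)[OF r(2)]
    by (simp_all add: ypoint_def cl cl' Int_absorb2)
  then have "r = r'" using eq by simp
  then have "cl' = cl" using c cl cl' by simp
  then have "x = x'"
    using ycoords_inject[OF assms(1,2)] assms(3) coords by simp
  then show ?thesis using \<open>cl' = cl\<close> by simp
qed

theorem yclass_eq_iff_ypoint:
  assumes "finite A" "yrep A cl x" "yrep A cl' x'"
  shows "yclass A cl x = yclass A cl' x' \<longleftrightarrow> ypoint A cl x = ypoint A cl' x'"
proof
  assume "yclass A cl x = yclass A cl' x'"
  then show "ypoint A cl x = ypoint A cl' x'"
    using ypoint_equivclp[OF assms(1), of "(cl, x)" "(cl', x')"] by (simp add: rclass_eq_iff)
next
  assume eq: "ypoint A cl x = ypoint A cl' x'"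
  obtain c1 x1 where 1: "yrep A c1 x1" "inner_coords A (ycoords c1 x1) = stars A (fst c1)"
    "ypoint A c1 x1 = ypoint A cl x" "equivclp (ygen A) (c1, x1) (cl, x)"
    using ex_inner_rep[OF assms(1,2)] by blast
  obtain c2 x2 where 2: "yrep A c2 x2" "inner_coords A (ycoords c2 x2) = stars A (fst c2)"
    "ypoint A c2 x2 = ypoint A cl' x'" "equivclp (ygen A) (c2, x2) (cl', x')"
    using ex_inner_rep[OF assms(1,3)] by blast
  have "c1 = c2 \<and> x1 = x2"
    using inner_rep_unique[OF assms(1) 1(1) 2(1) 1(2) 2(2)] 1(3) 2(3) eq by simp
  then show "yclass A cl x = yclass A cl' x'"
    using 1(4) 2(4) unfolding rclass_eq_iff by (metis equivclp_sym equivclp_trans)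
qed

definition top_cell :: "'a set \<Rightarrow> ('a \<times> 'a) set \<Rightarrow> 'a ycell" where
  "top_cell A L = (\<lambda>a\<in>A. Star, L)"

definition top_coords :: "'a set \<Rightarrow> ('a \<times> 'a) set \<Rightarrow> ('a \<Rightarrow> real) \<Rightarrow> nat \<Rightarrow> real" where
  "top_coords A L f j = (if j < card A then f (the_inv_into A (order_rank L) j) else 0)"

definition top_ypoint :: "'a set \<Rightarrow> ('a \<times> 'a) set \<Rightarrow> ('a \<Rightarrow> real) \<Rightarrow> ('a \<Rightarrow> real) \<times> ('a \<times> 'a) set" where
  "top_ypoint A L f = (restrict f A, Restr L (inner_coords A f))"

lemma stars_top_cell: "stars A (fst (top_cell A L)) = A"
  by (simp add: top_cell_def stars_def)

lemma top_cell_in_Ycells: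
  assumes "strict_linorder_on A L"
  shows "top_cell A L \<in> Ycells A" "Ydim A (top_cell A L) = card A"
  using assms by (simp_all add: Ycells_iff Ydim_def stars_top_cell) (simp add: top_cell_def)

lemma the_inv_into_order_rank:
  assumes "finite A" "strict_linorder_on A L" "j < card A"
  shows "the_inv_into A (order_rank L) j \<in> A"
  using bij_betw_the_inv_into[OF bij_betw_order_rank[OF assms(1,2)]] assms(3)
  by (auto simp: bij_betw_def)

lemma ycoords_top_cell:
  assumes "finite A" "strict_linorder_on A L" "a \<in> A"
  shows "ycoords (top_cell A L) (top_coords A L f) a = f a"
proof -
  have "order_rank L a < card A" "the_inv_into A (order_rank L) (order_rank L a) = a"
    using bij_betw_order_rank[OF assms(1,2)] assms(3) by (auto simp: bij_betw_def the_inv_into_f_f)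
  then show ?thesis
    using assms(3) by (simp add: ycoords_def top_cell_def top_coords_def)
qed

lemma ypoint_top_cell:
  assumes "finite A" "strict_linorder_on A L"
  shows "ypoint A (top_cell A L) (top_coords A L f) = top_ypoint A L f"
proof -
  have "restrict (ycoords (top_cell A L) (top_coords A L f)) A = restrict f A"
    using ycoords_top_cell[OF assms] by (simp cong: restrict_cong)
  moreover have "inner_coords A (ycoords (top_cell A L) (top_coords A L f)) = inner_coords A f"
    unfolding inner_coords_def by (intro Collect_cong) (auto simp: ycoords_top_cell[OF assms])
  ultimately show ?thesis
    by (simp add: ypoint_def top_ypoint_def top_cell_def)
qed

lemma yrep_top_cell:
  assumes "finite A" "strict_linorder_on A L" "\<forall>a\<in>A. 0 \<le> f a \<and> f a \<le> 1"
  shows "yrep A (top_cell A L) (top_coords A L f)"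
  using top_cell_in_Ycells[OF assms(2)] the_inv_into_order_rank[OF assms(1,2)] assms(3)
  by (auto simp: yrep_def cube_def top_coords_def)

lemma top_coords_restrict_const:
  assumes "finite A" "strict_linorder_on A L"
  shows "top_coords A L (restrict (\<lambda>_. c) A) = (\<lambda>j. if j < card A then c else 0)"
  using the_inv_into_order_rank[OF assms] by (auto simp: top_coords_def fun_eq_iff)

lemma top_coords_continuous_mono:
  assumes "finite A" "strict_linorder_on A L"
    and "\<forall>a\<in>A. continuous_on S (\<lambda>t. f t a) \<and> mono_on S (\<lambda>t. f t a)"
  shows "continuous_on S (\<lambda>t. top_coords A L (f t))" "mono_coords S (\<lambda>t. top_coords A L (f t))"
proof -
  show "continuous_on S (\<lambda>t. top_coords A L (f t))"
  proof (rule continuous_on_coordinatewise_then_product)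
    fix j
    show "continuous_on S (\<lambda>t. top_coords A L (f t) j)"
      using the_inv_into_order_rank[OF assms(1,2), of j] assms(3)
      by (cases "j < card A") (simp_all add: top_coords_def)
  qed
  show "mono_coords S (\<lambda>t. top_coords A L (f t))"
    using the_inv_into_order_rank[OF assms(1,2)] assms(3)
    by (auto simp: mono_coords_def top_coords_def mono_on_def)
qed

lemma ycoords_continuous_mono:
  assumes "continuous_on S \<beta>" "mono_coords S \<beta>"
  shows "continuous_on S (\<lambda>t. ycoords cl (\<beta> t) v)" "mono_on S (\<lambda>t. ycoords cl (\<beta> t) v)"
proof -
  show "continuous_on S (\<lambda>t. ycoords cl (\<beta> t) v)"
    using continuous_on_product_then_coordinatewise[OF assms(1)]
    by (cases "fst cl v") (simp_all add: ycoords_def)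
  show "mono_on S (\<lambda>t. ycoords cl (\<beta> t) v)"
  proof (rule mono_onI)
    fix r s assume "r \<in> S" "s \<in> S" "r \<le> s"
    then have "\<beta> r j \<le> \<beta> s j" for j
      using assms(2) unfolding mono_coords_def by blast
    then show "ycoords cl (\<beta> r) v \<le> ycoords cl (\<beta> s) v"
      by (cases "fst cl v") (simp_all add: ycoords_def)
  qed
qed

text \<open>Phrased through the invariants of the points \<open>\<alpha> t\<close> so that it glues along consecutive
  intervals, which a lifting into one top cell does not do directly.\<close>
definition top_cube_path :: "'a set \<Rightarrow> (real \<Rightarrow> ('a ycell \<times> (nat \<Rightarrow> real)) set) \<Rightarrow> real \<Rightarrow> real \<Rightarrow> bool" where
  "top_cube_path A \<alpha> a b \<longleftrightarrow>
     (\<forall>t\<in>{a..b}. \<exists>cl x. yrep A cl x \<and> \<alpha> t = yclass A cl x) \<and>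
     (\<forall>v\<in>A. continuous_on {a..b} (\<lambda>t. fst (ypoint_of A (\<alpha> t)) v) \<and>
             mono_on {a..b} (\<lambda>t. fst (ypoint_of A (\<alpha> t)) v)) \<and>
     (\<exists>L. strict_linorder_on A L \<and>
          (\<forall>t\<in>{a..b}. ypoint_of A (\<alpha> t) = top_ypoint A L (fst (ypoint_of A (\<alpha> t)))))"

lemma top_cube_path_cell:
  assumes "finite A" "cl \<in> Ycells A" "continuous_on {a..b} \<beta>"
    "\<forall>t\<in>{a..b}. \<beta> t \<in> cube (Ydim A cl)" "mono_coords {a..b} \<beta>"
    "\<forall>t\<in>{a..b}. \<alpha> t = yclass A cl (\<beta> t)"
  shows "top_cube_path A \<alpha> a b"
proof -
  have point: "ypoint_of A (\<alpha> t) = ypoint A cl (\<beta> t)" if "t \<in> {a..b}" for t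
    using assms(6) that ypoint_of_yclass[OF assms(1)] by simp
  have coord: "fst (ypoint_of A (\<alpha> t)) v = ycoords cl (\<beta> t) v" if "t \<in> {a..b}" "v \<in> A" for t v
    using point that by (simp add: ypoint_def)
  have coords_ok: "continuous_on {a..b} (\<lambda>t. fst (ypoint_of A (\<alpha> t)) v) \<and>
      mono_on {a..b} (\<lambda>t. fst (ypoint_of A (\<alpha> t)) v)" if "v \<in> A" for v
  proof
    show "continuous_on {a..b} (\<lambda>t. fst (ypoint_of A (\<alpha> t)) v)"
      using ycoords_continuous_mono(1)[OF assms(3,5)] by (rule continuous_on_eq) (simp add: coord that)
    show "mono_on {a..b} (\<lambda>t. fst (ypoint_of A (\<alpha> t)) v)"
    proof (rule mono_onI)
      fix r s assume rs: "r \<in> {a..b}" "s \<in> {a..b}" "r \<le> s"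
      then show "fst (ypoint_of A (\<alpha> r)) v \<le> fst (ypoint_of A (\<alpha> s)) v"
        using mono_onD[OF ycoords_continuous_mono(2)[OF assms(3,5)] rs]
        by (simp add: coord[OF rs(1) that] coord[OF rs(2) that])
    qed
  qed
  have "strict_linorder_on (stars A (fst cl)) (snd cl)"
    using assms(2) by (simp add: Ycells_iff)
  then obtain L where L: "strict_linorder_on A L"
    "Restr L (stars A (fst cl)) = Restr (snd cl) (stars A (fst cl))"
    using strict_linorder_on_extend[OF assms(1), of "stars A (fst cl)" "snd cl"]
      strict_linorder_onD(1) by (fastforce simp: stars_def)
  have "ypoint_of A (\<alpha> t) = top_ypoint A L (fst (ypoint_of A (\<alpha> t)))" if "t \<in> {a..b}" for t
  proof -
    have "Restr (snd cl) (inner_coords A (ycoords cl (\<beta> t))) = Restr L (inner_coords A (ycoords cl (\<beta> t)))"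
      using Restr_eq_subset[OF inner_coords_subset_stars L(2)] by simp
    then show ?thesis
      using point[OF that] by (simp add: ypoint_def top_ypoint_def)
  qed
  moreover have "\<forall>t\<in>{a..b}. \<exists>cl x. yrep A cl x \<and> \<alpha> t = yclass A cl x"
    using assms(2,4,6) unfolding yrep_def by blast
  ultimately show ?thesis
    unfolding top_cube_path_def using coords_ok L(1) by blast
qed

lemma mono_on_atLeastAtMost_Un:
  fixes f :: "'a::linorder \<Rightarrow> 'b::order"
  assumes "mono_on {a..b} f" "mono_on {b..c} f"
  shows "mono_on {a..c} f"
proof (rule mono_onI)
  fix r s assume rs: "r \<in> {a..c}" "s \<in> {a..c}" "r \<le> s"
  consider "s \<le> b" | "b \<le> r" | "r \<le> b" "b \<le> s" by fastforce
  then show "f r \<le> f s"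
  proof cases
    case 3
    then have "f r \<le> f b" "f b \<le> f s"
      using rs mono_onD[OF assms(1)] mono_onD[OF assms(2)] by auto
    then show ?thesis by (rule order_trans)
  qed (use rs mono_onD[OF assms(1)] mono_onD[OF assms(2)] in auto)
qed

lemma top_cube_path_glue:
  assumes "finite A" "a \<le> b" "b \<le> c" "top_cube_path A \<alpha> a b" "top_cube_path A \<alpha> b c"
  shows "top_cube_path A \<alpha> a c"
proof -
  define p where "p t = fst (ypoint_of A (\<alpha> t))" for t
  have ivl: "{a..c} = {a..b} \<union> {b..c}" using assms(2,3) by auto
  obtain L1 where L1: "strict_linorder_on A L1" "\<forall>t\<in>{a..b}. ypoint_of A (\<alpha> t) = top_ypoint A L1 (p t)"
    using assms(4) by (auto simp: top_cube_path_def p_def)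
  obtain L2 where L2: "strict_linorder_on A L2" "\<forall>t\<in>{b..c}. ypoint_of A (\<alpha> t) = top_ypoint A L2 (p t)"
    using assms(5) by (auto simp: top_cube_path_def p_def)
  have mono1: "mono_on {a..b} (\<lambda>t. p t v)" and mono2: "mono_on {b..c} (\<lambda>t. p t v)" if "v \<in> A" for v
    using assms(4,5) that by (simp_all add: top_cube_path_def p_def)
  define D where "D = {v \<in> A. 0 < p b v}"
  define U where "U = {v \<in> A. p b v < 1}"
  have DU: "D \<union> U = A" by (auto simp: D_def U_def)
  have inner_D: "inner_coords A (p t) \<subseteq> D" if "t \<in> {a..b}" for t
    using mono_onD[OF mono1, of _ t b] that assms(2) by (fastforce simp: inner_coords_def D_def)
  have inner_U: "inner_coords A (p t) \<subseteq> U" if "t \<in> {b..c}" for t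
    using mono_onD[OF mono2, of _ b t] that assms(3) by (fastforce simp: inner_coords_def U_def)
  have "\<exists>L. strict_linorder_on (D \<union> U) L \<and>
      (\<forall>t\<in>{a..b} \<union> {b..c}. snd (ypoint_of A (\<alpha> t)) = Restr L (inner_coords A (p t)))"
  proof (rule strict_linorder_on_glue)
    show "\<forall>t\<in>{a..b}. snd (ypoint_of A (\<alpha> t)) = Restr L1 (inner_coords A (p t)) \<and>
        inner_coords A (p t) \<subseteq> D"
      using L1(2) inner_D by (simp add: top_ypoint_def)
    show "\<forall>t\<in>{b..c}. snd (ypoint_of A (\<alpha> t)) = Restr L2 (inner_coords A (p t)) \<and>
        inner_coords A (p t) \<subseteq> U"
      using L2(2) inner_U by (simp add: top_ypoint_def)
  qed (use assms(1-3) L1(1) L2(1) DU in \<open>auto simp: inner_coords_def D_def U_def\<close>)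
  then obtain L where L: "strict_linorder_on A L"
    "\<forall>t\<in>{a..c}. snd (ypoint_of A (\<alpha> t)) = Restr L (inner_coords A (p t))"
    unfolding DU ivl by blast
  have "\<forall>t\<in>{a..c}. ypoint_of A (\<alpha> t) = top_ypoint A L (p t)"
    using L(2) by (simp add: top_ypoint_def p_def prod_eq_iff)
  moreover have "\<forall>t\<in>{a..c}. \<exists>cl x. yrep A cl x \<and> \<alpha> t = yclass A cl x"
    using assms(4,5) unfolding top_cube_path_def ivl by blast
  moreover have "continuous_on {a..c} (\<lambda>t. p t v) \<and> mono_on {a..c} (\<lambda>t. p t v)" if "v \<in> A" for v
  proof
    show "continuous_on {a..c} (\<lambda>t. p t v)"
      unfolding ivl using assms(4,5) that
      by (intro continuous_on_closed_Un) (simp_all add: top_cube_path_def p_def)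
    show "mono_on {a..c} (\<lambda>t. p t v)"
      using mono1[OF that] mono2[OF that] by (rule mono_on_atLeastAtMost_Un)
  qed
  ultimately show ?thesis
    using L(1) by (auto simp: top_cube_path_def p_def)
qed

lemma interval_chain_induct:
  fixes ts :: "nat \<Rightarrow> real"
  assumes "1 \<le> m" "\<forall>k<m. ts k < ts (Suc k)"
    and pieces: "\<And>k. k \<in> {1..m} \<Longrightarrow> P (ts (k - 1)) (ts k)"
    and glue: "\<And>a b c. a \<le> b \<Longrightarrow> b \<le> c \<Longrightarrow> P a b \<Longrightarrow> P b c \<Longrightarrow> P a c"
  shows "P (ts 0) (ts m)"
proof -
  have "P (ts 0) (ts n) \<and> ts 0 \<le> ts n" if "1 \<le> n" "n \<le> m" for n
    using that
  proof (induction n rule: nat_induct_at_least)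
    case base
    then show ?case using pieces[of 1] assms(2) by force
  next
    case (Suc n)
    then have "P (ts 0) (ts n)" "ts 0 \<le> ts n" "ts n < ts (Suc n)" "P (ts n) (ts (Suc n))"
      using pieces[of "Suc n"] assms(2) by auto
    then show ?case using glue by force
  qed
  then show ?thesis using assms(1) by blast
qed

lemma dpath_top_cube_path:
  assumes "finite A" "dpath (Ycells A) (Ydim A) (Yface A) \<alpha>"
  shows "top_cube_path A \<alpha> 0 1"
proof -
  obtain m ts cs \<beta>s where m: "1 \<le> m" "ts 0 = 0" "ts m = 1" "\<forall>k<m. ts k < ts (Suc k)"
    and pieces: "\<forall>k\<in>{1..m}. cs k \<in> Ycells A \<and> continuous_on {ts (k - 1)..ts k} (\<beta>s k) \<and>
      (\<forall>t\<in>{ts (k - 1)..ts k}. \<beta>s k t \<in> cube (Ydim A (cs k))) \<and>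
      mono_coords {ts (k - 1)..ts k} (\<beta>s k) \<and>
      (\<forall>t\<in>{ts (k - 1)..ts k}. \<alpha> t = yclass A (cs k) (\<beta>s k t))"
    using assms(2) unfolding dpath_def by blast
  have "top_cube_path A \<alpha> (ts 0) (ts m)"
  proof (rule interval_chain_induct[OF m(1,4)])
    show "top_cube_path A \<alpha> (ts (k - 1)) (ts k)" if "k \<in> {1..m}" for k
      using pieces that
      by (intro top_cube_path_cell[OF assms(1), where cl = "cs k" and \<beta> = "\<beta>s k"]) auto
  qed (rule top_cube_path_glue[OF assms(1)])
  then show ?thesis using m(2,3) by simp
qed

lemma top_cube_path_in_top_cell:
  assumes "finite A" "top_cube_path A \<alpha> a b"
  obtains L where "strict_linorder_on A L"
    "continuous_on {a..b} (\<lambda>t. top_coords A L (fst (ypoint_of A (\<alpha> t))))"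
    "mono_coords {a..b} (\<lambda>t. top_coords A L (fst (ypoint_of A (\<alpha> t))))"
    "\<And>t. t \<in> {a..b} \<Longrightarrow> yrep A (top_cell A L) (top_coords A L (fst (ypoint_of A (\<alpha> t)))) \<and>
        \<alpha> t = yclass A (top_cell A L) (top_coords A L (fst (ypoint_of A (\<alpha> t))))"
proof -
  define p where "p t = fst (ypoint_of A (\<alpha> t))" for t
  obtain L where L: "strict_linorder_on A L" "\<forall>t\<in>{a..b}. ypoint_of A (\<alpha> t) = top_ypoint A L (p t)"
    using assms(2) by (auto simp: top_cube_path_def p_def)
  have "yrep A (top_cell A L) (top_coords A L (p t)) \<and> \<alpha> t = yclass A (top_cell A L) (top_coords A L (p t))"
    if t: "t \<in> {a..b}" for t
  proof -
    obtain cl x where rep: "yrep A cl x" "\<alpha> t = yclass A cl x"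
      using assms(2) t unfolding top_cube_path_def by blast
    then have point: "ypoint_of A (\<alpha> t) = ypoint A cl x"
      using ypoint_of_yclass[OF assms(1)] by simp
    then have "p t v = ycoords cl x v" if "v \<in> A" for v
      using that by (simp add: p_def ypoint_def)
    then have top: "yrep A (top_cell A L) (top_coords A L (p t))"
      using yrep_top_cell[OF assms(1) L(1)] ycoords_bounds[OF assms(1) rep(1)] by simp
    have "ypoint A cl x = ypoint A (top_cell A L) (top_coords A L (p t))"
      using point[symmetric] L(2) t ypoint_top_cell[OF assms(1) L(1)] by simp
    then show ?thesis
      using yclass_eq_iff_ypoint[OF assms(1) rep(1) top] rep(2) top by simp
  qed
  moreover have "\<forall>v\<in>A. continuous_on {a..b} (\<lambda>t. p t v) \<and> mono_on {a..b} (\<lambda>t. p t v)"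
    using assms(2) by (simp add: top_cube_path_def p_def)
  ultimately show ?thesis
    using that[OF L(1) top_coords_continuous_mono[OF assms(1) L(1)]] by (simp add: p_def)
qed

lemma fst_ypoint_Yzero: "fst (ypoint A (Yzero A) x) = restrict (\<lambda>_. 0) A"
  by (simp add: ypoint_def ycoords_def Yzero_def cong: restrict_cong)

lemma fst_ypoint_Yone: "fst (ypoint A (Yone A) x) = restrict (\<lambda>_. 1) A"
  by (simp add: ypoint_def ycoords_def Yone_def cong: restrict_cong)

theorem proposition3p3:
  fixes A :: "'a set" and n :: nat and \<alpha> :: "real \<Rightarrow> ('a ycell \<times> (nat \<Rightarrow> real)) set"
  assumes "finite A" and "card A = n"
    and "dpath (Ycells A) (Ydim A) (Yface A) \<alpha>"
    and "\<alpha> 0 = rclass (Ycells A) (Ydim A) (Yface A) (Yzero A) zero_vec"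
    and "\<alpha> 1 = rclass (Ycells A) (Ydim A) (Yface A) (Yone A) zero_vec"
  shows "\<exists>c \<beta>. c \<in> Ycells A \<and> Ydim A c = n \<and>
           continuous_on {0..1} \<beta> \<and> (\<forall>t\<in>{0..1}. \<beta> t \<in> cube n) \<and>
           mono_coords {0..1} \<beta> \<and> \<beta> 0 = zero_vec \<and> \<beta> 1 = one_vec n \<and>
           (\<forall>t\<in>{0..1}. \<alpha> t = rclass (Ycells A) (Ydim A) (Yface A) c (\<beta> t))"
proof -
  obtain L where L: "strict_linorder_on A L"
    "continuous_on {0..1} (\<lambda>t. top_coords A L (fst (ypoint_of A (\<alpha> t))))"
    "mono_coords {0..1} (\<lambda>t. top_coords A L (fst (ypoint_of A (\<alpha> t))))"
    "\<And>t. t \<in> {0..1} \<Longrightarrow> yrep A (top_cell A L) (top_coords A L (fst (ypoint_of A (\<alpha> t)))) \<and>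
        \<alpha> t = yclass A (top_cell A L) (top_coords A L (fst (ypoint_of A (\<alpha> t))))"
    using top_cube_path_in_top_cell[OF assms(1) dpath_top_cube_path[OF assms(1,3)]] by blast
  have "top_coords A L (fst (ypoint_of A (\<alpha> 0))) = zero_vec"
    "top_coords A L (fst (ypoint_of A (\<alpha> 1))) = one_vec n"
    using assms(2,4,5) top_coords_restrict_const[OF assms(1) L(1)]
    by (simp_all add: ypoint_of_yclass[OF assms(1)] fst_ypoint_Yzero fst_ypoint_Yone
        zero_vec_def one_vec_def)
  then show ?thesis
    using L top_cell_in_Ycells[OF L(1)] assms(2)
    by (intro exI[of _ "top_cell A L"] exI[of _ "\<lambda>t. top_coords A L (fst (ypoint_of A (\<alpha> t)))"])
      (auto simp: yrep_def)
qed

end
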